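(* Let $\alpha\in(0,2]$ and $\nu>0$. Let $X_1,X_2,\ldots$ be independent identically distributed random variables such that $$\frac{1}{n^{1/\alpha}}\sum_{i=1}^n X_i\Longrightarrow S_{\alpha,0}\quad (n\to\infty).$$ For each $n\in\mathbb{N}$ let $N_n$ be a random variable, independent of $X_1,X_2,\ldots$, having the negative binomial distribution with parameters $\nu$ and $p=1/n$. Then $$\frac{1}{n^{1/\alpha}}\sum_{i=1}^{N_n}X_i\Longrightarrow L_{\alpha,\nu}\quad(n\to\infty).$$
   Context: $\Longrightarrow$ denotes convergence in distribution. $S_{\alpha,0}$ denotes a symmetric strictly stable random variable with characteristic function $e^{-|t|^\alpha}$. The negative binomial distribution with parameters $\nu>0$, $p\in(0,1)$ is given by $\mathsf{P}(N=k)=\frac{\Gamma(\nu+k-1)}{(k-1)!\,\Gamma(\nu)}p^\nu(1-p)^{k-1}$, $k=1,2,\ldots$. $L_{\alpha,\nu}$ denotes a random variable with characteristic function $(1+|t|^{\alpha})^{-\nu}$, $t\in\mathbb{R}$. *)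

theory Defs
  imports "HOL-Probability.Probability"
begin

definition negbin_prob :: "real \<Rightarrow> real \<Rightarrow> nat \<Rightarrow> real" where
  "negbin_prob \<nu> p k =
     (if k = 0 then 0
      else Gamma (\<nu> + real k - 1) / (fact (k - 1) * Gamma \<nu>) * p powr \<nu> * (1 - p) ^ (k - 1))"

end

theory Submission
  imports Defs
begin

text \<open>Conditioning on \<open>N n\<close>, the characteristic function of the normalised random sum is the
  negative binomial generating function at \<open>z n = \<phi> (t / n powr (1 / \<alpha>))\<close>, where \<open>\<phi>\<close> is the
  characteristic function of \<open>X 0\<close>; for \<open>p = 1 / n\<close> it equals \<open>z n * (n * (1 - z n) + z n) powr (- \<nu>)\<close>.
  The stable limit \<open>z n ^ n \<rightarrow> exp (- \<bar>t\<bar> powr \<alpha>)\<close> holds uniformly on compacts, so following a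
  continuous logarithm along \<open>[0, t]\<close> gives \<open>n * Ln (z n) \<rightarrow> - \<bar>t\<bar> powr \<alpha>\<close>, hence
  \<open>n * (1 - z n) \<rightarrow> \<bar>t\<bar> powr \<alpha>\<close> and the characteristic functions tend to
  \<open>(1 + \<bar>t\<bar> powr \<alpha>) powr (- \<nu>)\<close>. That is the characteristic function of \<open>G powr (1 / \<alpha>) * Y\<close>
  for independent \<open>G\<close> with Gamma(\<open>\<nu>\<close>) law and \<open>Y\<close> with the stable law, and Levy's continuity
  theorem concludes.\<close>

lemma Gamma_add_of_nat:
  fixes \<nu> :: real
  assumes "0 < \<nu>"
  shows "Gamma (\<nu> + real j) = pochhammer \<nu> j * Gamma \<nu>"
proof -
  have "\<nu> \<notin> \<int>\<^sub>\<le>\<^sub>0" using assms by (auto elim!: nonpos_Ints_cases)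
  moreover have "Gamma \<nu> \<noteq> 0" using Gamma_real_pos[OF assms] by simp
  ultimately show ?thesis by (simp add: pochhammer_Gamma)
qed

lemma negbin_prob_Suc:
  assumes "0 < \<nu>"
  shows "negbin_prob \<nu> p (Suc j) = p powr \<nu> * (pochhammer \<nu> j / fact j) * (1 - p) ^ j"
  using Gamma_real_pos[OF assms]
  by (simp add: negbin_prob_def Gamma_add_of_nat[OF assms] field_simps)

lemma gbinomial_neg_mult_power_minus:
  "((- of_real \<nu> :: complex) gchoose j) * (- w) ^ j = of_real (pochhammer \<nu> j / fact j) * w ^ j"
proof -
  have "((- of_real \<nu> :: complex) gchoose j) * (- w) ^ j
      = ((-1) ^ j * (-1) ^ j) * (pochhammer (of_real \<nu>) j / fact j * w ^ j)"
    by (simp add: gbinomial_pochhammer power_minus[of w] mult_ac)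
  also have "(-1 :: complex) ^ j * (-1) ^ j = 1"
    by (metis power_mult_distrib mult_minus1 power_one minus_minus)
  finally show ?thesis by (simp add: pochhammer_of_real[symmetric])
qed

lemma of_real_powr_mult_powr_neg:
  fixes w :: complex
  assumes "0 < p"
  shows "of_real (p powr \<nu>) * w powr (- of_real \<nu>) = (w / of_real p) powr (- of_real \<nu>)"
proof -
  have "(w / of_real p) powr (- of_real \<nu>) = (of_real (1 / p) * w) powr (- of_real \<nu>)"
    using assms by (simp add: field_simps)
  also have "\<dots> = of_real (1 / p) powr (- of_real \<nu>) * w powr (- of_real \<nu>)"
    by (rule powr_times_real_left) (use assms in auto)
  also have "of_real (1 / p) powr (- of_real \<nu>) = (of_real ((1 / p) powr (- \<nu>)) :: complex)"
    by (subst powr_of_real[symmetric]) (use assms in auto)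
  also have "(1 / p) powr (- \<nu>) = p powr \<nu>"
    using assms by (simp add: powr_divide powr_minus_divide)
  finally show ?thesis by simp
qed

lemma negbin_prob_sums:
  fixes z :: complex
  assumes \<nu>: "0 < \<nu>" and p: "0 < p" "p \<le> 1" and z: "norm z \<le> 1"
  shows "(\<lambda>k. of_real (negbin_prob \<nu> p k) * z ^ k) sums
           (z * ((1 - of_real (1 - p) * z) / of_real p) powr (- of_real \<nu>))"
proof -
  define w where "w = of_real (1 - p) * z"
  have "norm w = (1 - p) * norm z"
    using p by (simp add: w_def norm_mult del: of_real_diff)
  also have "\<dots> \<le> 1 - p"
    using z p by (intro mult_left_le) auto
  also have "\<dots> < 1"
    using p by simp
  finally have "norm w < 1" .
  then have "(\<lambda>j. ((- of_real \<nu>) gchoose j) * (- w) ^ j) sums (1 - w) powr (- of_real \<nu>)"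
    using gen_binomial_complex[of "- w" "- of_real \<nu>"] by simp
  then have "(\<lambda>j. (z * of_real (p powr \<nu>)) * (of_real (pochhammer \<nu> j / fact j) * w ^ j))
      sums ((z * of_real (p powr \<nu>)) * (1 - w) powr (- of_real \<nu>))"
    unfolding gbinomial_neg_mult_power_minus by (rule sums_mult)
  also have "(\<lambda>j. (z * of_real (p powr \<nu>)) * (of_real (pochhammer \<nu> j / fact j) * w ^ j))
      = (\<lambda>j. of_real (negbin_prob \<nu> p (Suc j)) * z ^ Suc j)"
    by (simp add: negbin_prob_Suc[OF \<nu>] w_def power_mult_distrib mult_ac del: of_real_diff)
  finally have "(\<lambda>k. of_real (negbin_prob \<nu> p k) * z ^ k)
      sums ((z * of_real (p powr \<nu>)) * (1 - w) powr (- of_real \<nu>) + of_real (negbin_prob \<nu> p 0) * z ^ 0)"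
    by (rule sums_Suc)
  moreover have "negbin_prob \<nu> p 0 = 0"
    by (simp add: negbin_prob_def)
  ultimately show ?thesis
    unfolding w_def[symmetric] of_real_powr_mult_powr_neg[OF p(1), symmetric]
    by (simp add: mult.assoc)
qed

definition gamma_distr :: "real \<Rightarrow> real measure" where
  "gamma_distr \<nu> = density lborel (\<lambda>x. ennreal (indicator {0..} x * x powr (\<nu> - 1) * exp (- x) / Gamma \<nu>))"

lemma nn_integral_gamma_kernel:
  fixes c \<nu> :: real
  assumes c: "0 < c" and \<nu>: "0 < \<nu>"
  shows "(\<integral>\<^sup>+x. ennreal (indicator {0..} x * x powr (\<nu> - 1) * exp (- (c * x))) \<partial>lborel)
         = ennreal (Gamma \<nu> / c powr \<nu>)"
proof -
  define f where "f = (\<lambda>x::real. ennreal (indicator {0..} x * x powr (\<nu> - 1) * exp (- (c * x))))"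
  have [measurable]: "f \<in> borel_measurable borel"
    unfolding f_def by measurable
  have scale: "f (x / c) = ennreal ((1 / c) powr (\<nu> - 1)) * (ennreal (x powr (\<nu> - 1) / exp x) * indicator {0..} x)"
    for x
  proof (cases "x \<ge> 0")
    case True
    then have "(x / c) powr (\<nu> - 1) = (1 / c) powr (\<nu> - 1) * x powr (\<nu> - 1)"
      using c by (simp add: powr_divide)
    then show ?thesis
      using True c by (simp add: f_def ennreal_mult[symmetric] exp_minus field_simps)
  next
    case False
    then show ?thesis
      using c by (simp add: f_def zero_le_divide_iff)
  qed
  have "(\<integral>\<^sup>+x. f x \<partial>lborel) = ennreal (1 / c) * (\<integral>\<^sup>+x. f (0 + (1 / c) * x) \<partial>lborel)"
    using nn_integral_real_affine[of f "1 / c" 0] c by simp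
  also have "\<dots> = ennreal (1 / c) * (ennreal ((1 / c) powr (\<nu> - 1))
      * (\<integral>\<^sup>+x. ennreal (x powr (\<nu> - 1) / exp x) * indicator {0..} x \<partial>lborel))"
    by (simp add: scale nn_integral_cmult)
  also have "(\<integral>\<^sup>+x. ennreal (x powr (\<nu> - 1) / exp x) * indicator {0..} x \<partial>lborel) = ennreal (Gamma \<nu>)"
    by (rule nn_integral_has_integral_lebesgue'[OF _ Gamma_integral_real[OF \<nu>]]) simp
  also have "ennreal (1 / c) * (ennreal ((1 / c) powr (\<nu> - 1)) * ennreal (Gamma \<nu>))
      = ennreal (Gamma \<nu> / c powr \<nu>)"
  proof -
    have "1 / c * ((1 / c) powr (\<nu> - 1) * Gamma \<nu>) = Gamma \<nu> / c powr \<nu>"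
      using c by (simp add: powr_divide powr_diff field_simps)
    then show ?thesis
      using c Gamma_real_pos[OF \<nu>] by (simp add: ennreal_mult[symmetric])
  qed
  finally show ?thesis
    unfolding f_def .
qed

lemma nn_integral_gamma_distr_exp:
  assumes s: "0 \<le> s" and \<nu>: "0 < \<nu>"
  shows "(\<integral>\<^sup>+x. ennreal (exp (- (s * \<bar>x\<bar>))) \<partial>gamma_distr \<nu>) = ennreal ((1 + s) powr (- \<nu>))"
proof -
  have \<Gamma>: "0 < Gamma \<nu>"
    using Gamma_real_pos[OF \<nu>] .
  have "(\<integral>\<^sup>+x. ennreal (exp (- (s * \<bar>x\<bar>))) \<partial>gamma_distr \<nu>)
     = (\<integral>\<^sup>+x. ennreal (1 / Gamma \<nu>) * ennreal (indicator {0..} x * x powr (\<nu> - 1) * exp (- ((1 + s) * x))) \<partial>lborel)"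
    unfolding gamma_distr_def
    by (subst nn_integral_density)
       (use \<Gamma> in \<open>auto intro!: nn_integral_cong simp: indicator_def ennreal_mult[symmetric] field_simps exp_add[symmetric]\<close>)
  also have "\<dots> = ennreal (1 / Gamma \<nu>) * ennreal (Gamma \<nu> / (1 + s) powr \<nu>)"
    by (subst nn_integral_cmult) (use nn_integral_gamma_kernel[of "1 + s" \<nu>] s \<nu> in auto)
  also have "\<dots> = ennreal ((1 + s) powr (- \<nu>))"
    using \<Gamma> s by (simp add: ennreal_mult[symmetric] powr_minus field_simps)
  finally show ?thesis .
qed

lemma prob_space_gamma_distr:
  assumes "0 < \<nu>"
  shows "prob_space (gamma_distr \<nu>)"
proof
  have "emeasure (gamma_distr \<nu>) (space (gamma_distr \<nu>)) = (\<integral>\<^sup>+x. ennreal (exp (- (0 * \<bar>x\<bar>))) \<partial>gamma_distr \<nu>)"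
    by (simp add: gamma_distr_def emeasure_density)
  also have "\<dots> = 1"
    using nn_integral_gamma_distr_exp[of 0 \<nu>] assms by simp
  finally show "emeasure (gamma_distr \<nu>) (space (gamma_distr \<nu>)) = 1" .
qed

lemma integral_gamma_distr_exp:
  assumes "0 \<le> s" and "0 < \<nu>"
  shows "(\<integral>x. exp (- (s * \<bar>x\<bar>)) \<partial>gamma_distr \<nu>) = (1 + s) powr (- \<nu>)"
  using nn_integral_gamma_distr_exp[OF assms]
  by (subst integral_eq_nn_integral) (auto simp: gamma_distr_def)

text \<open>The Linnik law is the law of \<open>G powr (1 / \<alpha>) * Y\<close> with \<open>G\<close> Gamma(\<open>\<nu>\<close>)-distributed and \<open>Y\<close>
  an independent symmetric \<open>\<alpha>\<close>-stable variable: conditioning on \<open>G\<close> gives \<open>exp (- \<bar>t\<bar> powr \<alpha> * G)\<close>.\<close>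
lemma linnik_distribution_exists:
  assumes \<alpha>: "0 < \<alpha>" and \<nu>: "0 < \<nu>" and S: "real_distribution S"
    and char_S: "\<And>t. char S t = complex_of_real (exp (- (\<bar>t\<bar> powr \<alpha>)))"
  shows "\<exists>L. real_distribution L \<and> (\<forall>t. char L t = complex_of_real ((1 + \<bar>t\<bar> powr \<alpha>) powr (- \<nu>)))"
proof -
  interpret G: prob_space "gamma_distr \<nu>"
    by (rule prob_space_gamma_distr[OF \<nu>])
  interpret S: real_distribution S by fact
  interpret GS: pair_prob_space "gamma_distr \<nu>" S ..
  define h where "h = (\<lambda>(g::real, y::real). \<bar>g\<bar> powr (1 / \<alpha>) * y)"
  have "sets (gamma_distr \<nu> \<Otimes>\<^sub>M S) = sets (borel \<Otimes>\<^sub>M borel)"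
    by (rule sets_pair_measure_cong) (auto simp: gamma_distr_def)
  then have [measurable]: "h \<in> borel_measurable (gamma_distr \<nu> \<Otimes>\<^sub>M S)"
    unfolding h_def by (subst measurable_cong_sets[OF _ refl]) measurable
  define L where "L = distr (gamma_distr \<nu> \<Otimes>\<^sub>M S) borel h"
  have "real_distribution L"
    unfolding L_def real_distribution_def real_distribution_axioms_def
    by (auto intro!: GS.P.prob_space_distr)
  moreover have "char L t = complex_of_real ((1 + \<bar>t\<bar> powr \<alpha>) powr (- \<nu>))" for t
  proof -
    have "char L t = (\<integral>p. iexp (t * h p) \<partial>(gamma_distr \<nu> \<Otimes>\<^sub>M S))"
      unfolding char_def L_def by (simp add: integral_distr)
    also have "\<dots> = (\<integral>g. (\<integral>y. iexp (t * h (g, y)) \<partial>S) \<partial>gamma_distr \<nu>)"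
      by (rule GS.integral_fst'[symmetric], rule GS.P.integrable_const_bound[where B=1])
         (auto simp: norm_exp_i_times)
    also have "\<dots> = (\<integral>g. complex_of_real (exp (- (\<bar>t\<bar> powr \<alpha> * \<bar>g\<bar>))) \<partial>gamma_distr \<nu>)"
    proof (rule Bochner_Integration.integral_cong[OF refl])
      fix g :: real
      have "(\<integral>y. iexp (t * h (g, y)) \<partial>S) = char S (t * \<bar>g\<bar> powr (1 / \<alpha>))"
        unfolding char_def h_def by (simp add: mult.assoc)
      moreover have "\<bar>t * \<bar>g\<bar> powr (1 / \<alpha>)\<bar> powr \<alpha> = \<bar>t\<bar> powr \<alpha> * \<bar>g\<bar>"
        using \<alpha> by (simp add: abs_mult powr_mult powr_powr)
      ultimately show "(\<integral>y. iexp (t * h (g, y)) \<partial>S) = complex_of_real (exp (- (\<bar>t\<bar> powr \<alpha> * \<bar>g\<bar>)))"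
        by (simp add: char_S)
    qed
    also have "\<dots> = complex_of_real ((1 + \<bar>t\<bar> powr \<alpha>) powr (- \<nu>))"
      using integral_gamma_distr_exp[of "\<bar>t\<bar> powr \<alpha>" \<nu>] \<nu> by simp
    finally show ?thesis .
  qed
  ultimately show ?thesis by blast
qed

lemma sigma_sets_vimage_comp_subset:
  assumes Z: "Z \<in> measurable M MZ" and h: "h \<in> measurable MZ MN"
  shows "sigma_sets (space M) {(h \<circ> Z) -` A \<inter> space M | A. A \<in> sets MN}
    \<subseteq> sets (vimage_algebra (space M) Z MZ)"
proof -
  have "Z \<in> space M \<rightarrow> space MZ"
    using measurable_space[OF Z] by auto
  then have "h \<circ> Z \<in> measurable (vimage_algebra (space M) Z MZ) MN"
    by (rule measurable_comp[OF measurable_vimage_algebra1 h])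
  then have "{(h \<circ> Z) -` A \<inter> space M | A. A \<in> sets MN} \<subseteq> sets (vimage_algebra (space M) Z MZ)"
    using measurable_sets[of "h \<circ> Z" "vimage_algebra (space M) Z MZ" MN] by auto
  from sets.sigma_sets_subset[OF this] show ?thesis
    by simp
qed

lemma (in prob_space) indep_set_mono:
  "indep_set A B \<Longrightarrow> A' \<subseteq> A \<Longrightarrow> B' \<subseteq> B \<Longrightarrow> indep_set A' B'"
  unfolding indep_set_def by (rule indep_sets_mono_sets) (auto split: bool.split)

lemma (in prob_space) indep_var_compose_of_indep_set_vimage_algebra:
  assumes "indep_set (sets (vimage_algebra (space M) X MX)) (sets (vimage_algebra (space M) Y MY))"
    and "X \<in> measurable M MX" and "Y \<in> measurable M MY"
    and "f \<in> measurable MX N1" and "g \<in> measurable MY N2"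
  shows "indep_var N1 (f \<circ> X) N2 (g \<circ> Y)"
  using indep_set_mono[OF assms(1) sigma_sets_vimage_comp_subset[OF assms(2,4)]
      sigma_sets_vimage_comp_subset[OF assms(3,5)]] assms(2-5)
  unfolding indep_var_eq by (auto intro: measurable_comp)

lemma (in prob_space) char_distr_iid_sum_divide:
  fixes X :: "nat \<Rightarrow> 'a \<Rightarrow> real"
  assumes indep: "indep_vars (\<lambda>_. borel) X UNIV"
    and ident: "\<And>i. distr M borel (X i) = distr M borel (X 0)"
  shows "char (distr M borel (\<lambda>\<omega>. (\<Sum>i<n. X i \<omega>) / c)) u = char (distr M borel (X 0)) (u / c) ^ n"
proof -
  have [measurable]: "X i \<in> borel_measurable M" for i
    using indep by (auto simp: indep_vars_def)
  have "char (distr M borel (\<lambda>\<omega>. (\<Sum>i<n. X i \<omega>) / c)) u = (\<integral>\<omega>. iexp (u * ((\<Sum>i<n. X i \<omega>) / c)) \<partial>M)"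
    unfolding char_def by (rule integral_distr) measurable
  also have "\<dots> = (\<integral>\<omega>. iexp ((u / c) * (\<Sum>i<n. X i \<omega>)) \<partial>M)"
    by (simp add: divide_inverse mult_ac)
  also have "\<dots> = char (distr M borel (\<lambda>\<omega>. \<Sum>i<n. X i \<omega>)) (u / c)"
    unfolding char_def by (rule integral_distr[symmetric]) measurable
  also have "\<dots> = (\<Prod>i<n. char (distr M borel (X i)) (u / c))"
    by (rule char_distr_sum[OF indep_vars_subset[OF indep]]) simp
  also have "\<dots> = (\<Prod>i<n. char (distr M borel (X 0)) (u / c))"
    by (rule prod.cong[OF refl]) (subst ident, rule refl)
  also have "\<dots> = char (distr M borel (X 0)) (u / c) ^ n"
    by simp
  finally show ?thesis .
qed

lemma (in prob_space) integral_indicator_mult_iexp_sum: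
  fixes X :: "nat \<Rightarrow> 'a \<Rightarrow> real" and N :: "'a \<Rightarrow> nat"
  assumes indep: "indep_vars (\<lambda>_. borel) X UNIV"
    and ident: "\<And>i. distr M borel (X i) = distr M borel (X 0)"
    and N[measurable]: "N \<in> measurable M (count_space UNIV)"
    and indep_N: "indep_set (sets (vimage_algebra (space M) N (count_space UNIV)))
          (sets (vimage_algebra (space M) (\<lambda>\<omega> i. X i \<omega>) (Pi\<^sub>M UNIV (\<lambda>_. borel))))"
  shows "(\<integral>\<omega>. complex_of_real (indicator {k} (N \<omega>)) * iexp (t * ((\<Sum>i<k. X i \<omega>) / c)) \<partial>M)
    = complex_of_real (prob {\<omega> \<in> space M. N \<omega> = k}) * char (distr M borel (X 0)) (t / c) ^ k"
proof -
  have [measurable]: "X i \<in> borel_measurable M" for i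
    using indep by (auto simp: indep_vars_def)
  have [measurable]: "(\<lambda>\<omega> i. X i \<omega>) \<in> measurable M (Pi\<^sub>M UNIV (\<lambda>_. borel))"
    by (rule measurable_PiM_single') (auto simp: space_PiM)
  define g where "g = (\<lambda>n::nat. complex_of_real (indicator {k} n))"
  define h where "h = (\<lambda>x::nat \<Rightarrow> real. iexp (t * ((\<Sum>i<k. x i) / c)))"
  have [measurable]: "h \<in> borel_measurable (Pi\<^sub>M UNIV (\<lambda>_. borel))"
    unfolding h_def by measurable
  have "indep_var borel (g \<circ> N) borel (h \<circ> (\<lambda>\<omega> i. X i \<omega>))"
    by (rule indep_var_compose_of_indep_set_vimage_algebra[OF indep_N]) (auto simp: g_def)
  then have "integral\<^sup>L M (\<lambda>\<omega>. (g \<circ> N) \<omega> * (h \<circ> (\<lambda>\<omega> i. X i \<omega>)) \<omega>)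
      = integral\<^sup>L M (g \<circ> N) * integral\<^sup>L M (h \<circ> (\<lambda>\<omega> i. X i \<omega>))"
  proof (rule indep_var_lebesgue_integral)
    show "integrable M (g \<circ> N)"
      by (rule integrable_const_bound[where B=1]) (auto simp: g_def indicator_def)
    show "integrable M (h \<circ> (\<lambda>\<omega> i. X i \<omega>))"
      by (rule integrable_const_bound[where B=1]) (auto simp: h_def)
  qed
  also have "integral\<^sup>L M (g \<circ> N) = (\<integral>\<omega>. complex_of_real (indicator {\<omega> \<in> space M. N \<omega> = k} \<omega>) \<partial>M)"
    by (rule Bochner_Integration.integral_cong) (auto simp: g_def indicator_def)
  also have "\<dots> = complex_of_real (prob {\<omega> \<in> space M. N \<omega> = k})"
    by (subst integral_complex_of_real) simp
  also have "integral\<^sup>L M (h \<circ> (\<lambda>\<omega> i. X i \<omega>)) = char (distr M borel (\<lambda>\<omega>. (\<Sum>i<k. X i \<omega>) / c)) t"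
    unfolding char_def h_def by (subst integral_distr) (simp_all add: comp_def)
  finally show ?thesis
    by (simp add: g_def h_def comp_def char_distr_iid_sum_divide[OF indep ident])
qed

lemma (in prob_space) char_distr_random_sum_divide:
  fixes X :: "nat \<Rightarrow> 'a \<Rightarrow> real" and N :: "'a \<Rightarrow> nat"
  assumes indep: "indep_vars (\<lambda>_. borel) X UNIV"
    and ident: "\<And>i. distr M borel (X i) = distr M borel (X 0)"
    and N[measurable]: "N \<in> measurable M (count_space UNIV)"
    and indep_N: "indep_set (sets (vimage_algebra (space M) N (count_space UNIV)))
          (sets (vimage_algebra (space M) (\<lambda>\<omega> i. X i \<omega>) (Pi\<^sub>M UNIV (\<lambda>_. borel))))"
  shows "(\<lambda>k. complex_of_real (prob {\<omega> \<in> space M. N \<omega> = k}) * char (distr M borel (X 0)) (t / c) ^ k)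
     sums char (distr M borel (\<lambda>\<omega>. (\<Sum>i<N \<omega>. X i \<omega>) / c)) t"
proof -
  have [measurable]: "X i \<in> borel_measurable M" for i
    using indep by (auto simp: indep_vars_def)
  define f where "f = (\<lambda>k \<omega>. complex_of_real (indicator {k} (N \<omega>)) * iexp (t * ((\<Sum>i<k. X i \<omega>) / c)))"
  have [measurable]: "(\<lambda>\<omega>. complex_of_real (indicator {k} (N \<omega>))) \<in> borel_measurable M" for k
    by (rule measurable_compose[OF N]) simp
  have [measurable]: "f k \<in> borel_measurable M" for k
    unfolding f_def by measurable
  have "integrable M (f k)" for k
    by (rule integrable_const_bound[where B=1], simp add: f_def norm_mult indicator_def, measurable)
  then have "(\<lambda>k. integral\<^sup>L M (f k)) sums (\<integral>\<omega>. (\<Sum>k. f k \<omega>) \<partial>M)"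
  proof (rule sums_integral)
    have "norm (f k \<omega>) = (if k = N \<omega> then 1 else 0)" for k \<omega>
      by (simp add: f_def indicator_def norm_mult)
    then show "AE \<omega> in M. summable (\<lambda>k. norm (f k \<omega>))"
      using sums_single[of _ "\<lambda>_. 1::real"] by (simp add: sums_iff)
    have "(\<integral>\<omega>. norm (f k \<omega>) \<partial>M) = prob {\<omega> \<in> space M. N \<omega> = k}" for k
      by (subst Bochner_Integration.integral_cong[where g="indicator {\<omega> \<in> space M. N \<omega> = k}"])
         (auto simp: f_def indicator_def norm_mult)
    moreover have "(\<lambda>k. prob {\<omega> \<in> space M. N \<omega> = k}) sums prob (\<Union>k. {\<omega> \<in> space M. N \<omega> = k})"
      by (rule finite_measure_UNION) (auto simp: disjoint_family_on_def)
    ultimately show "summable (\<lambda>k. \<integral>\<omega>. norm (f k \<omega>) \<partial>M)"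
      by (simp add: sums_iff)
  qed
  moreover have "(\<lambda>k. f k \<omega>) sums iexp (t * ((\<Sum>i<N \<omega>. X i \<omega>) / c))" for \<omega>
  proof -
    have "f k \<omega> = (if k = N \<omega> then iexp (t * ((\<Sum>i<k. X i \<omega>) / c)) else 0)" for k
      by (simp add: f_def indicator_def)
    then show ?thesis
      by (simp only:) (rule sums_single)
  qed
  then have "(\<integral>\<omega>. (\<Sum>k. f k \<omega>) \<partial>M) = (\<integral>\<omega>. iexp (t * ((\<Sum>i<N \<omega>. X i \<omega>) / c)) \<partial>M)"
    by (intro Bochner_Integration.integral_cong refl sums_unique[symmetric])
  also have "\<dots> = char (distr M borel (\<lambda>\<omega>. (\<Sum>i<N \<omega>. X i \<omega>) / c)) t"
    unfolding char_def by (subst integral_distr) auto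
  ultimately show ?thesis
    unfolding f_def integral_indicator_mult_iexp_sum[OF indep ident N indep_N] by simp
qed

lemma norm_iexp_minus_one_le: "norm (iexp y - 1) \<le> min 2 \<bar>y\<bar>"
proof -
  have "norm (iexp y - 1) \<le> \<bar>y\<bar>"
    using iexp_approx1[of y 0] by simp
  moreover have "norm (iexp y - 1) \<le> 2"
    using norm_triangle_ineq4[of "iexp y" 1] by (simp add: norm_exp_i_times)
  ultimately show ?thesis
    by simp
qed

text \<open>A bound on the modulus of continuity of \<open>char \<mu>\<close> that is continuous in \<open>\<mu>\<close> under weak
  convergence.\<close>
definition char_modulus :: "real measure \<Rightarrow> real \<Rightarrow> real" where
  "char_modulus \<mu> h = (\<integral>x. min 2 (h * \<bar>x\<bar>) \<partial>\<mu>)"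

lemma norm_char_diff_le_char_modulus:
  assumes "real_distribution \<mu>" and "\<bar>u - v\<bar> \<le> h"
  shows "norm (char \<mu> u - char \<mu> v) \<le> char_modulus \<mu> h"
proof -
  interpret real_distribution \<mu> by fact
  have int_u: "integrable \<mu> (\<lambda>x. iexp (u * x))" and int_v: "integrable \<mu> (\<lambda>x. iexp (v * x))"
    by (auto intro: integrable_iexp)
  have bound: "norm (iexp (u * x) - iexp (v * x)) \<le> min 2 (h * \<bar>x\<bar>)" for x
  proof -
    have "iexp (u * x) - iexp (v * x) = iexp (v * x) * (iexp ((u - v) * x) - 1)"
      by (simp add: algebra_simps flip: exp_add)
    then have "norm (iexp (u * x) - iexp (v * x)) = norm (iexp ((u - v) * x) - 1)"
      by (simp add: norm_mult norm_exp_i_times)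
    also have "\<dots> \<le> min 2 \<bar>(u - v) * x\<bar>"
      by (rule norm_iexp_minus_one_le)
    also have "\<dots> \<le> min 2 (h * \<bar>x\<bar>)"
      using mult_right_mono[OF assms(2), of "\<bar>x\<bar>"] by (auto simp: abs_mult)
    finally show ?thesis .
  qed
  have "\<bar>min 2 (h * \<bar>x\<bar>)\<bar> \<le> 2" for x
    using assms(2) by (simp add: min_def)
  then have int_modulus: "integrable \<mu> (\<lambda>x. min 2 (h * \<bar>x\<bar>))"
    by (intro integrable_const_bound[where B=2]) auto
  have "norm (char \<mu> u - char \<mu> v) = norm (\<integral>x. iexp (u * x) - iexp (v * x) \<partial>\<mu>)"
    unfolding char_def using int_u int_v by simp
  also have "\<dots> \<le> (\<integral>x. norm (iexp (u * x) - iexp (v * x)) \<partial>\<mu>)"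
    by (rule integral_norm_bound)
  also have "\<dots> \<le> char_modulus \<mu> h"
    unfolding char_modulus_def using int_u int_v int_modulus bound by (intro integral_mono) auto
  finally show ?thesis .
qed

lemma norm_char_diff_le_char_modulus_add:
  assumes "real_distribution \<mu>" and "real_distribution S" and "\<bar>u - v\<bar> \<le> h"
  shows "norm (char \<mu> u - char S u) \<le> char_modulus \<mu> h + norm (char \<mu> v - char S v) + char_modulus S h"
proof -
  have "norm (char \<mu> u - char S u)
      \<le> norm (char \<mu> u - char \<mu> v) + norm (char \<mu> v - char S v) + norm (char S v - char S u)"
    using norm_triangle_ineq[of "char \<mu> u - char \<mu> v" "char \<mu> v - char S v"]
      norm_triangle_ineq[of "char \<mu> u - char S v" "char S v - char S u"]
    by simp
  moreover have "norm (char \<mu> u - char \<mu> v) \<le> char_modulus \<mu> h"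
    using assms(1,3) by (rule norm_char_diff_le_char_modulus)
  moreover have "norm (char S v - char S u) \<le> char_modulus S h"
    using assms(2,3) by (intro norm_char_diff_le_char_modulus) auto
  ultimately show ?thesis
    by linarith
qed

lemma exists_char_modulus_less:
  assumes "real_distribution \<mu>" and "0 < e"
  shows "\<exists>h>0. char_modulus \<mu> h < e"
proof -
  interpret real_distribution \<mu> by fact
  have "(\<lambda>m. \<integral>x. min 2 (1 / Suc m * \<bar>x\<bar>) \<partial>\<mu>) \<longlonglongrightarrow> (\<integral>x. 0 \<partial>\<mu>)"
  proof (rule integral_dominated_convergence[where w="\<lambda>_. 2"])
    show "AE x in \<mu>. (\<lambda>m. min 2 (1 / Suc m * \<bar>x\<bar>)) \<longlonglongrightarrow> 0"
    proof (rule AE_I2)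
      fix x :: real
      have "(\<lambda>m. min 2 (1 / Suc m * \<bar>x\<bar>)) \<longlonglongrightarrow> min 2 (0 * \<bar>x\<bar>)"
        by (intro tendsto_min tendsto_mult tendsto_const lim_1_over_n[THEN LIMSEQ_Suc])
      then show "(\<lambda>m. min 2 (1 / Suc m * \<bar>x\<bar>)) \<longlonglongrightarrow> 0"
        by simp
    qed
  qed auto
  then have "(\<lambda>m. char_modulus \<mu> (1 / Suc m)) \<longlonglongrightarrow> 0"
    by (simp add: char_modulus_def)
  from order_tendstoD(2)[OF this assms(2)] obtain m where "char_modulus \<mu> (1 / Suc m) < e"
    by (auto simp: eventually_sequentially)
  then show ?thesis
    by (intro exI[of _ "1 / Suc m"]) auto
qed

text \<open>Weak convergence gives convergence of \<open>char_modulus\<close> for fixed \<open>h\<close>, hence equicontinuity;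
  with pointwise convergence at the finitely many points of an \<open>h\<close>-net this gives uniformity.\<close>
lemma weak_conv_imp_char_uniform_conv:
  assumes \<mu>: "\<And>n. real_distribution (\<mu> n)" and S: "real_distribution S"
    and wc: "weak_conv_m \<mu> S" and e: "0 < e"
  shows "eventually (\<lambda>n. \<forall>u\<in>{-T..T}. norm (char (\<mu> n) u - char S u) < e) sequentially"
proof -
  obtain h where h: "h > 0" "char_modulus S h < e / 3"
    using exists_char_modulus_less[OF S, of "e / 3"] e by auto
  have "(\<lambda>n. char_modulus (\<mu> n) h) \<longlonglongrightarrow> char_modulus S h"
    unfolding char_modulus_def
    by (rule weak_conv_imp_integral_bdd_continuous_conv[OF \<mu> S wc, where B=2])
       (use h(1) in \<open>auto intro!: continuous_intros\<close>)
  then have ev_modulus: "eventually (\<lambda>n. char_modulus (\<mu> n) h < e / 3) sequentially"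
    using h(2) by (rule order_tendstoD(2))
  obtain G where G: "G \<subseteq> {-T..T}" "finite G" "{-T..T} \<subseteq> (\<Union>v\<in>G. ball v h)"
    using compactE_image[of "{-T..T}" "{-T..T}" "\<lambda>v. ball v h"] h(1) by force
  have "eventually (\<lambda>n. \<forall>v\<in>G. norm (char (\<mu> n) v - char S v) < e / 3) sequentially"
  proof (rule eventually_ball_finite[OF G(2)], rule ballI)
    fix v
    have "(\<lambda>n. norm (char (\<mu> n) v - char S v)) \<longlonglongrightarrow> 0"
      using levy_continuity1[OF \<mu> S wc] by (simp add: LIM_zero tendsto_norm_zero)
    then show "eventually (\<lambda>n. norm (char (\<mu> n) v - char S v) < e / 3) sequentially"
      using e by (intro order_tendstoD(2)) auto
  qed
  then show ?thesis
    using ev_modulus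
  proof eventually_elim
    case (elim n)
    show ?case
    proof
      fix u assume "u \<in> {-T..T}"
      then obtain v where v: "v \<in> G" "\<bar>u - v\<bar> \<le> h"
        using G(3) by (force simp: dist_real_def)
      have "norm (char (\<mu> n) u - char S u)
          \<le> char_modulus (\<mu> n) h + norm (char (\<mu> n) v - char S v) + char_modulus S h"
        by (rule norm_char_diff_le_char_modulus_add[OF \<mu> S v(2)])
      also have "\<dots> < e / 3 + e / 3 + e / 3"
        using elim v(1) h(2) by (auto intro!: add_strict_mono)
      finally show "norm (char (\<mu> n) u - char S u) < e"
        by simp
    qed
  qed
qed

lemma abs_Im_less_pi_half_if_Re_exp_pos:
  fixes g :: "real \<Rightarrow> complex"
  assumes cont: "continuous_on {0..1} g" and Im_0: "Im (g 0) = 0"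
    and Re_pos: "\<And>s. s \<in> {0..1} \<Longrightarrow> 0 < Re (exp (g s))"
  shows "\<bar>Im (g 1)\<bar> < pi / 2"
proof (rule ccontr)
  have cos_pos: "0 < cos (Im (g s))" if "s \<in> {0..1}" for s
    using Re_pos[OF that] by (simp add: Re_exp zero_less_mult_iff)
  have cont_Im: "continuous_on {0..1} (\<lambda>s. Im (g s))"
    by (intro continuous_intros cont)
  assume "\<not> \<bar>Im (g 1)\<bar> < pi / 2"
  then consider "pi / 2 \<le> Im (g 1)" | "Im (g 1) \<le> - (pi / 2)"
    by linarith
  then obtain s where s: "s \<in> {0..1}" "Im (g s) = pi / 2 \<or> Im (g s) = - (pi / 2)"
  proof cases
    case 1
    then show ?thesis
      using IVT'[of "\<lambda>s. Im (g s)" 0 "pi / 2" 1, OF _ 1 _ cont_Im] Im_0 that by fastforce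
  next
    case 2
    then show ?thesis
      using IVT2'[of "\<lambda>s. Im (g s)" 1 "- (pi / 2)" 0, OF 2 _ _ cont_Im] Im_0 that by fastforce
  qed
  then have "cos (Im (g s)) = 0"
    by (metis cos_pi_half cos_minus)
  with cos_pos[OF s(1)] show False
    by simp
qed

lemma tendsto_zero_if_exp_tendsto_one:
  fixes w :: "nat \<Rightarrow> complex"
  assumes "(\<lambda>n. exp (w n)) \<longlonglongrightarrow> 1" and "eventually (\<lambda>n. \<bar>Im (w n)\<bar> < pi) sequentially"
  shows "w \<longlonglongrightarrow> 0"
proof -
  have "(\<lambda>n. Ln (exp (w n))) \<longlonglongrightarrow> Ln 1"
    by (rule tendsto_Ln[OF assms(1)]) simp
  moreover have "eventually (\<lambda>n. Ln (exp (w n)) = w n) sequentially"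
    using assms(2) by eventually_elim (auto intro: Ln_exp)
  ultimately show ?thesis
    by (auto intro: Lim_transform_eventually)
qed

lemma tendsto_of_nat_mult_one_minus:
  fixes z :: "nat \<Rightarrow> complex"
  assumes z: "z \<longlonglongrightarrow> 1" and lim: "(\<lambda>n. of_nat n * Ln (z n)) \<longlonglongrightarrow> - l"
  shows "(\<lambda>n. of_nat n * (1 - z n)) \<longlonglongrightarrow> l"
proof -
  define q where "q = (\<lambda>w::complex. if w = 0 then 1 else (exp w - 1) / w)"
  have "((\<lambda>w::complex. (exp w - 1) / w) \<longlongrightarrow> 1) (at 0)"
    using DERIV_exp[of 0, unfolded DERIV_def] by simp
  then have "(q \<longlongrightarrow> 1) (at 0)"
    by (rule Lim_transform_eventually) (auto simp: eventually_at_filter q_def)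
  moreover have "q 0 = 1"
    by (simp add: q_def)
  ultimately have "isCont q 0"
    by (simp add: isCont_def)
  moreover have "(\<lambda>n. Ln (z n)) \<longlonglongrightarrow> 0"
    using tendsto_Ln[OF z] by simp
  ultimately have "(\<lambda>n. q (Ln (z n))) \<longlonglongrightarrow> 1"
    using isCont_tendsto_compose[of 0 q] by (simp add: q_def)
  then have "(\<lambda>n. - (of_nat n * Ln (z n)) * q (Ln (z n))) \<longlonglongrightarrow> - (- l) * 1"
    by (intro tendsto_mult tendsto_minus lim)
  moreover have "eventually (\<lambda>n. z n \<noteq> 0) sequentially"
    using tendsto_imp_eventually_ne[OF z] by simp
  then have "eventually (\<lambda>n. - (of_nat n * Ln (z n)) * q (Ln (z n)) = of_nat n * (1 - z n)) sequentially"
    by eventually_elim (auto simp: q_def field_simps dest: exp_Ln)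
  ultimately show ?thesis
    by (auto intro: Lim_transform_eventually)
qed

lemma not_nonpos_Reals_if_norm_minus_one_less:
  fixes z :: complex
  assumes "norm (z - 1) < 1"
  shows "z \<notin> \<real>\<^sub>\<le>\<^sub>0"
proof
  assume "z \<in> \<real>\<^sub>\<le>\<^sub>0"
  then obtain r where "z = of_real r" "r \<le> 0"
    by (rule nonpos_Reals_cases)
  moreover from this have "norm (z - 1) = \<bar>r - 1\<bar>"
    by (metis norm_of_real of_real_1 of_real_diff)
  ultimately show False
    using assms by simp
qed

text \<open>Along the segment from \<open>0\<close> the values of \<open>\<phi>\<close> avoid the branch cut of \<open>Ln\<close>, and
  \<open>\<phi> ^ n\<close> stays close to \<open>exp (- \<rho>)\<close>; so the continuous logarithm \<open>n Ln \<phi> + \<rho>\<close> of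
  \<open>\<phi> ^ n * exp \<rho>\<close>, which starts at \<open>0\<close>, cannot cross \<open>Im = \<plusminus>pi / 2\<close>.\<close>
lemma abs_Im_of_nat_mult_Ln_less_pi_half:
  fixes \<phi> :: "real \<Rightarrow> complex" and \<rho> :: "real \<Rightarrow> real"
  assumes \<phi>: "\<And>u. isCont \<phi> u" "\<phi> 0 = 1" and \<rho>: "\<And>u. isCont \<rho> u" "\<rho> 0 = 0"
    and near: "\<And>u. \<bar>u\<bar> \<le> \<bar>x\<bar> \<Longrightarrow> norm (\<phi> u - 1) < 1"
    and close: "\<And>s. s \<in> {0..1} \<Longrightarrow> norm (\<phi> (s * x) ^ n * exp (of_real (\<rho> (s * y))) - 1) < 1"
  shows "\<bar>Im (of_nat n * Ln (\<phi> x) + of_real (\<rho> y))\<bar> < pi / 2"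
proof -
  define g where "g = (\<lambda>s. of_nat n * Ln (\<phi> (s * x)) + complex_of_real (\<rho> (s * y)))"
  have not_nonpos: "\<phi> (s * x) \<notin> \<real>\<^sub>\<le>\<^sub>0" if "s \<in> {0..1}" for s
  proof (rule not_nonpos_Reals_if_norm_minus_one_less, rule near)
    show "\<bar>s * x\<bar> \<le> \<bar>x\<bar>"
      using that by (simp add: abs_mult mult_left_le_one_le)
  qed
  have "continuous_on {0..1} g"
  proof (rule continuous_at_imp_continuous_on, rule ballI)
    fix s :: real assume s: "s \<in> {0..1}"
    have "isCont (\<lambda>s. \<phi> (s * x)) s" and "isCont (\<lambda>s. \<rho> (s * y)) s"
      by (auto intro!: isCont_o2[OF _ \<phi>(1)] isCont_o2[OF _ \<rho>(1)] continuous_intros)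
    then show "isCont g s"
      unfolding g_def using not_nonpos[OF s] by (auto intro!: continuous_intros isCont_Ln')
  qed
  moreover have "Im (g 0) = 0"
    by (simp add: g_def \<phi>(2))
  moreover have "0 < Re (exp (g s))" if s: "s \<in> {0..1}" for s
  proof -
    have "\<phi> (s * x) \<noteq> 0"
      using not_nonpos[OF s] by auto
    then have "exp (g s) = \<phi> (s * x) ^ n * exp (of_real (\<rho> (s * y)))"
      by (simp add: g_def exp_add exp_of_nat_mult)
    then show ?thesis
      using close[OF s] abs_Re_le_cmod[of "exp (g s) - 1"] by auto
  qed
  ultimately have "\<bar>Im (g 1)\<bar> < pi / 2"
    by (rule abs_Im_less_pi_half_if_Re_exp_pos)
  then show ?thesis
    by (simp add: g_def)
qed

lemma eventually_abs_Im_of_nat_mult_Ln_less_pi_half: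
  fixes \<mu> :: "nat \<Rightarrow> real measure" and \<phi> :: "real \<Rightarrow> complex" and \<rho> :: "real \<Rightarrow> real"
    and c :: "nat \<Rightarrow> real"
  assumes \<mu>: "\<And>n. real_distribution (\<mu> n)" and S: "real_distribution S" and wc: "weak_conv_m \<mu> S"
    and char_S: "\<And>u. char S u = complex_of_real (exp (- \<rho> u))" and \<rho>: "\<And>u. isCont \<rho> u"
    and char_\<mu>: "\<And>n u. char (\<mu> n) u = \<phi> (u / c n) ^ n"
    and \<phi>: "\<And>u. isCont \<phi> u" "\<phi> 0 = 1"
    and small: "(\<lambda>n. t / c n) \<longlonglongrightarrow> 0"
  shows "eventually (\<lambda>n. \<bar>Im (of_nat n * Ln (\<phi> (t / c n)) + of_real (\<rho> t))\<bar> < pi / 2) sequentially"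
proof -
  have \<rho>_0: "\<rho> 0 = 0"
    using char_S[of 0] real_distribution.char_zero[OF S] by simp
  obtain \<delta> where \<delta>: "\<delta> > 0" "\<And>y. \<bar>y\<bar> < \<delta> \<Longrightarrow> norm (\<phi> y - 1) < 1"
    using \<phi>(1)[of 0, unfolded continuous_at_eps_delta, rule_format, of 1] \<phi>(2) by (auto simp: dist_norm)
  obtain K where K: "\<And>u. u \<in> {-\<bar>t\<bar>..\<bar>t\<bar>} \<Longrightarrow> \<rho> u \<le> K"
    using continuous_attains_sup[of "{-\<bar>t\<bar>..\<bar>t\<bar>}" \<rho>] continuous_at_imp_continuous_on[of _ \<rho>] \<rho>
    by (auto simp del: atLeastAtMost_iff)
  have "eventually (\<lambda>n. \<bar>t / c n\<bar> < \<delta>) sequentially"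
    using order_tendstoD(2)[OF tendsto_rabs_zero[OF small] \<delta>(1)] .
  moreover have "eventually (\<lambda>n. \<forall>u\<in>{-\<bar>t\<bar>..\<bar>t\<bar>}. norm (char (\<mu> n) u - char S u) < exp (- K)) sequentially"
    by (rule weak_conv_imp_char_uniform_conv[OF \<mu> S wc]) simp
  ultimately show ?thesis
  proof eventually_elim
    case (elim n)
    show ?case
    proof (rule abs_Im_of_nat_mult_Ln_less_pi_half[OF \<phi> \<rho> \<rho>_0])
      show "norm (\<phi> u - 1) < 1" if "\<bar>u\<bar> \<le> \<bar>t / c n\<bar>" for u
        using that elim by (intro \<delta>(2)) linarith
      fix s :: real assume "s \<in> {0..1}"
      then have "\<bar>s * t\<bar> \<le> \<bar>t\<bar>"
        by (simp add: abs_mult mult_left_le_one_le)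
      then have st: "s * t \<in> {-\<bar>t\<bar>..\<bar>t\<bar>}"
        by (auto simp: abs_le_iff)
      have "\<phi> (s * (t / c n)) ^ n * exp (of_real (\<rho> (s * t))) - 1
          = (char (\<mu> n) (s * t) - char S (s * t)) * exp (of_real (\<rho> (s * t)))"
        by (simp add: char_\<mu> char_S algebra_simps flip: exp_add exp_of_real)
      also have "norm \<dots> < exp (- K) * exp K"
      proof -
        have "norm (char (\<mu> n) (s * t) - char S (s * t)) < exp (- K)"
          using elim st by blast
        moreover have "exp (\<rho> (s * t)) \<le> exp K"
          using K[OF st] by simp
        ultimately show ?thesis
          by (simp add: norm_mult exp_of_real) (rule mult_less_le_imp_less; simp)
      qed
      finally show "norm (\<phi> (s * (t / c n)) ^ n * exp (of_real (\<rho> (s * t))) - 1) < 1"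
        by (simp flip: exp_add)
    qed
  qed
qed

lemma weak_conv_char_power_imp_tendsto:
  fixes \<mu> :: "nat \<Rightarrow> real measure" and \<phi> :: "real \<Rightarrow> complex" and \<rho> :: "real \<Rightarrow> real"
    and c :: "nat \<Rightarrow> real"
  assumes \<mu>: "\<And>n. real_distribution (\<mu> n)" and S: "real_distribution S" and wc: "weak_conv_m \<mu> S"
    and char_S: "\<And>u. char S u = complex_of_real (exp (- \<rho> u))" and \<rho>: "\<And>u. isCont \<rho> u"
    and char_\<mu>: "\<And>n u. char (\<mu> n) u = \<phi> (u / c n) ^ n"
    and \<phi>: "\<And>u. isCont \<phi> u" "\<phi> 0 = 1"
    and c: "(\<lambda>n. 1 / c n) \<longlonglongrightarrow> 0"
  shows "(\<lambda>n. of_nat n * (1 - \<phi> (t / c n))) \<longlonglongrightarrow> complex_of_real (\<rho> t)"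
proof -
  have "(\<lambda>n. t * (1 / c n)) \<longlonglongrightarrow> t * 0"
    by (intro tendsto_mult tendsto_const c)
  then have small: "(\<lambda>n. t / c n) \<longlonglongrightarrow> 0"
    by simp
  then have z: "(\<lambda>n. \<phi> (t / c n)) \<longlonglongrightarrow> 1"
    using isCont_tendsto_compose[OF \<phi>(1)[of 0]] \<phi>(2) by simp
  have "(\<lambda>n. char (\<mu> n) t * exp (of_real (\<rho> t))) \<longlonglongrightarrow> char S t * exp (of_real (\<rho> t))"
    by (intro tendsto_mult tendsto_const levy_continuity1[OF \<mu> S wc])
  moreover have "char S t * exp (of_real (\<rho> t)) = 1"
    by (simp add: char_S flip: exp_of_real exp_add)
  moreover have "eventually (\<lambda>n. \<phi> (t / c n) \<noteq> 0) sequentially"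
    using tendsto_imp_eventually_ne[OF z] by simp
  then have "eventually (\<lambda>n. char (\<mu> n) t * exp (of_real (\<rho> t))
      = exp (of_nat n * Ln (\<phi> (t / c n)) + of_real (\<rho> t))) sequentially"
    by eventually_elim (simp add: char_\<mu> exp_add exp_of_nat_mult)
  ultimately have exp_lim: "(\<lambda>n. exp (of_nat n * Ln (\<phi> (t / c n)) + of_real (\<rho> t))) \<longlonglongrightarrow> 1"
    by (auto intro: Lim_transform_eventually)
  have "eventually (\<lambda>n. \<bar>Im (of_nat n * Ln (\<phi> (t / c n)) + of_real (\<rho> t))\<bar> < pi) sequentially"
    using eventually_abs_Im_of_nat_mult_Ln_less_pi_half[OF \<mu> S wc char_S \<rho> char_\<mu> \<phi> small]
    by eventually_elim simp
  with exp_lim have "(\<lambda>n. of_nat n * Ln (\<phi> (t / c n)) + of_real (\<rho> t)) \<longlonglongrightarrow> 0"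
    by (rule tendsto_zero_if_exp_tendsto_one)
  then have "(\<lambda>n. of_nat n * Ln (\<phi> (t / c n))) \<longlonglongrightarrow> - complex_of_real (\<rho> t)"
    by (auto dest: tendsto_add[OF _ tendsto_const[of "- complex_of_real (\<rho> t)"]])
  with z show ?thesis
    by (rule tendsto_of_nat_mult_one_minus)
qed

lemma tendsto_negbin_generating_function:
  fixes z :: "nat \<Rightarrow> complex"
  assumes lim: "(\<lambda>n. of_nat n * (1 - z n)) \<longlonglongrightarrow> complex_of_real a" and a: "-1 < a"
  shows "(\<lambda>n. z n * ((1 - of_real (1 - 1 / real n) * z n) / of_real (1 / real n)) powr (- of_real \<nu>))
           \<longlonglongrightarrow> complex_of_real ((1 + a) powr (- \<nu>))"
proof -
  have "(\<lambda>n. (of_nat n * (1 - z n)) * (1 / of_nat n)) \<longlonglongrightarrow> complex_of_real a * 0"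
    by (intro tendsto_mult lim lim_1_over_n)
  moreover have "eventually (\<lambda>n. (of_nat n * (1 - z n)) * (1 / of_nat n) = 1 - z n) sequentially"
    using eventually_ge_at_top[of "1::nat"] by eventually_elim auto
  ultimately have "(\<lambda>n. 1 - z n) \<longlonglongrightarrow> 0"
    by (auto intro: Lim_transform_eventually)
  then have z: "z \<longlonglongrightarrow> 1"
    using tendsto_diff[OF tendsto_const[of 1]] by force
  have "1 + complex_of_real a \<notin> \<real>\<^sub>\<le>\<^sub>0"
    using a by (auto simp: complex_nonpos_Reals_iff)
  then have "(\<lambda>n. z n * (of_nat n * (1 - z n) + z n) powr (- of_real \<nu>))
      \<longlonglongrightarrow> 1 * (complex_of_real a + 1) powr (- of_real \<nu>)"
    by (intro tendsto_mult z tendsto_powr_complex tendsto_add lim tendsto_const) (simp add: add.commute)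
  moreover have "(complex_of_real a + 1) powr (- of_real \<nu>) = complex_of_real ((1 + a) powr (- \<nu>))"
    using a by (subst powr_of_real[symmetric]) (auto simp: add.commute)
  moreover have "eventually (\<lambda>n. z n * (of_nat n * (1 - z n) + z n) powr (- of_real \<nu>)
      = z n * ((1 - of_real (1 - 1 / real n) * z n) / of_real (1 / real n)) powr (- of_real \<nu>)) sequentially"
    using eventually_ge_at_top[of "1::nat"]
  proof eventually_elim
    case (elim n)
    then have "(1 - of_real (1 - 1 / real n) * z n) / of_real (1 / real n) = of_nat n * (1 - z n) + z n"
      by (simp add: field_simps)
    then show ?case
      by simp
  qed
  ultimately show ?thesis
    by (auto intro: Lim_transform_eventually)
qed

lemma weak_conv_m_offset:
  assumes "weak_conv_m (\<lambda>n. \<mu> (n + k)) L"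
  shows "weak_conv_m \<mu> L"
  using assms unfolding weak_conv_m_def weak_conv_def by (blast intro: LIMSEQ_offset)

lemma (in prob_space) char_distr_negbin_sum_divide:
  fixes X :: "nat \<Rightarrow> 'a \<Rightarrow> real" and N :: "'a \<Rightarrow> nat" and t c :: real
  assumes indep: "indep_vars (\<lambda>_. borel) X UNIV"
    and ident: "\<And>i. distr M borel (X i) = distr M borel (X 0)"
    and N: "N \<in> measurable M (count_space UNIV)"
    and N_distr: "\<And>k. prob {\<omega> \<in> space M. N \<omega> = k} = negbin_prob \<nu> p k"
    and indep_N: "indep_set (sets (vimage_algebra (space M) N (count_space UNIV)))
          (sets (vimage_algebra (space M) (\<lambda>\<omega> i. X i \<omega>) (Pi\<^sub>M UNIV (\<lambda>_. borel))))"
    and \<nu>: "0 < \<nu>" and p: "0 < p" "p \<le> 1"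
  defines "\<phi> \<equiv> char (distr M borel (X 0)) (t / c)"
  shows "char (distr M borel (\<lambda>\<omega>. (\<Sum>i<N \<omega>. X i \<omega>) / c)) t
    = \<phi> * ((1 - of_real (1 - p) * \<phi>) / of_real p) powr (- of_real \<nu>)"
proof -
  have "real_distribution (distr M borel (X 0))"
    using indep by (auto simp: indep_vars_def intro: real_distribution_distr)
  then have "norm \<phi> \<le> 1"
    unfolding \<phi>_def by (rule real_distribution.cmod_char_le_1)
  from negbin_prob_sums[OF \<nu> p this] char_distr_random_sum_divide[OF indep ident N indep_N, of t c]
  show ?thesis
    unfolding \<phi>_def N_distr by (rule sums_unique2[symmetric])
qed

lemma (in prob_space) tendsto_of_nat_mult_one_minus_char_of_stable_limit:
  fixes X :: "nat \<Rightarrow> 'a \<Rightarrow> real"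
  assumes \<alpha>: "0 < \<alpha>"
    and indep: "indep_vars (\<lambda>_. borel) X UNIV"
    and ident: "\<And>i. distr M borel (X i) = distr M borel (X 0)"
    and S: "real_distribution S" and char_S: "\<And>t. char S t = complex_of_real (exp (- (\<bar>t\<bar> powr \<alpha>)))"
    and stable: "weak_conv_m (\<lambda>n. distr M borel (\<lambda>\<omega>. (\<Sum>i<n. X i \<omega>) / real n powr (1 / \<alpha>))) S"
  shows "(\<lambda>n. of_nat n * (1 - char (distr M borel (X 0)) (t / real n powr (1 / \<alpha>))))
      \<longlonglongrightarrow> complex_of_real (\<bar>t\<bar> powr \<alpha>)"
proof -
  have [measurable]: "X i \<in> borel_measurable M" for i
    using indep by (auto simp: indep_vars_def)
  have X_0: "real_distribution (distr M borel (X 0))"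
    by (rule real_distribution_distr) simp
  have "(\<lambda>n. 1 / real n powr (1 / \<alpha>)) \<longlonglongrightarrow> 0"
    using tendsto_neg_powr[of "- (1 / \<alpha>)", OF _ filterlim_real_sequentially] \<alpha>
    by (simp add: powr_minus divide_inverse)
  then show ?thesis
    using \<alpha>
    by (intro weak_conv_char_power_imp_tendsto[OF _ S stable char_S] char_distr_iid_sum_divide[OF indep ident]
        real_distribution_distr real_distribution.isCont_char[OF X_0] real_distribution.char_zero[OF X_0])
       (auto simp: isCont_def intro!: tendsto_powr' tendsto_intros)
qed

lemma (in prob_space) weak_conv_negbin_random_sum:
  fixes X :: "nat \<Rightarrow> 'a \<Rightarrow> real" and N :: "nat \<Rightarrow> 'a \<Rightarrow> nat" and c :: "nat \<Rightarrow> real"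
    and \<psi> :: "real \<Rightarrow> real"
  assumes indep: "indep_vars (\<lambda>_. borel) X UNIV"
    and ident: "\<And>i. distr M borel (X i) = distr M borel (X 0)"
    and \<nu>: "0 < \<nu>"
    and N: "\<And>n. n \<ge> 2 \<Longrightarrow> N n \<in> measurable M (count_space UNIV)"
    and N_distr: "\<And>n k. n \<ge> 2 \<Longrightarrow> prob {\<omega> \<in> space M. N n \<omega> = k} = negbin_prob \<nu> (1 / real n) k"
    and indep_N: "\<And>n. n \<ge> 2 \<Longrightarrow> indep_set (sets (vimage_algebra (space M) (N n) (count_space UNIV)))
          (sets (vimage_algebra (space M) (\<lambda>\<omega> i. X i \<omega>) (Pi\<^sub>M UNIV (\<lambda>_. borel))))"
    and lim: "\<And>t. (\<lambda>n. of_nat n * (1 - char (distr M borel (X 0)) (t / c n))) \<longlonglongrightarrow> complex_of_real (\<psi> t)"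
    and \<psi>: "\<And>t. -1 < \<psi> t"
    and L: "real_distribution L" and char_L: "\<And>t. char L t = complex_of_real ((1 + \<psi> t) powr (- \<nu>))"
  shows "weak_conv_m (\<lambda>n. distr M borel (\<lambda>\<omega>. (\<Sum>i<N n \<omega>. X i \<omega>) / c n)) L"
proof -
  have [measurable]: "X i \<in> borel_measurable M" for i
    using indep by (auto simp: indep_vars_def)
  have "weak_conv_m (\<lambda>n. distr M borel (\<lambda>\<omega>. (\<Sum>i<N (n + 2) \<omega>. X i \<omega>) / c (n + 2))) L"
  proof (rule levy_continuity[OF _ L])
    fix n t
    have [measurable]: "N (n + 2) \<in> measurable M (count_space UNIV)"
      by (rule N) simp
    show "real_distribution (distr M borel (\<lambda>\<omega>. (\<Sum>i<N (n + 2) \<omega>. X i \<omega>) / c (n + 2)))"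
      by (rule real_distribution_distr) measurable
    define \<phi> where "\<phi> n = char (distr M borel (X 0)) (t / c n)" for n
    have "(\<lambda>n. \<phi> n * ((1 - of_real (1 - 1 / real n) * \<phi> n) / of_real (1 / real n)) powr (- of_real \<nu>))
        \<longlonglongrightarrow> char L t"
      unfolding char_L \<phi>_def by (rule tendsto_negbin_generating_function[OF lim \<psi>])
    then have "(\<lambda>n. \<phi> (n + 2) * ((1 - of_real (1 - 1 / real (n + 2)) * \<phi> (n + 2)) / of_real (1 / real (n + 2)))
        powr (- of_real \<nu>)) \<longlonglongrightarrow> char L t"
      by (rule LIMSEQ_ignore_initial_segment)
    moreover have "char (distr M borel (\<lambda>\<omega>. (\<Sum>i<N (n + 2) \<omega>. X i \<omega>) / c (n + 2))) t
        = \<phi> (n + 2) * ((1 - of_real (1 - 1 / real (n + 2)) * \<phi> (n + 2)) / of_real (1 / real (n + 2)))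
          powr (- of_real \<nu>)" for n
      unfolding \<phi>_def
      by (rule char_distr_negbin_sum_divide[OF indep ident N N_distr indep_N \<nu>]) auto
    ultimately show "(\<lambda>n. char (distr M borel (\<lambda>\<omega>. (\<Sum>i<N (n + 2) \<omega>. X i \<omega>) / c (n + 2))) t)
        \<longlonglongrightarrow> char L t"
      by (simp only:)
  qed
  then show ?thesis
    by (rule weak_conv_m_offset)
qed

theorem theorem6:
  fixes M :: "'a measure" and X :: "nat \<Rightarrow> 'a \<Rightarrow> real" and N :: "nat \<Rightarrow> 'a \<Rightarrow> nat"
    and \<alpha> \<nu> :: real
  assumes "prob_space M"
    and "0 < \<alpha>" and "\<alpha> \<le> 2" and "0 < \<nu>"
    and iid_indep: "prob_space.indep_vars M (\<lambda>_. borel) X UNIV"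
    and iid_dist: "\<And>i. distr M borel (X i) = distr M borel (X 0)"
    and stable_lim: "\<exists>S. real_distribution S \<and>
        (\<forall>t. char S t = complex_of_real (exp (- (\<bar>t\<bar> powr \<alpha>)))) \<and>
        weak_conv_m (\<lambda>n. distr M borel (\<lambda>\<omega>. (\<Sum>i<n. X i \<omega>) / real n powr (1 / \<alpha>))) S"
    and N_meas: "\<And>n. n \<ge> 2 \<Longrightarrow> N n \<in> measurable M (count_space UNIV)"
    and N_dist: "\<And>n k. n \<ge> 2 \<Longrightarrow>
        measure M {\<omega> \<in> space M. N n \<omega> = k} = negbin_prob \<nu> (1 / real n) k"
    and N_indep: "\<And>n. n \<ge> 2 \<Longrightarrow>
        prob_space.indep_set M
          (sets (vimage_algebra (space M) (N n) (count_space UNIV)))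
          (sets (vimage_algebra (space M) (\<lambda>\<omega> i. X i \<omega>) (Pi\<^sub>M UNIV (\<lambda>_. borel))))"
  shows "\<exists>L. real_distribution L \<and>
        (\<forall>t. char L t = complex_of_real ((1 + \<bar>t\<bar> powr \<alpha>) powr (- \<nu>))) \<and>
        weak_conv_m (\<lambda>n. distr M borel (\<lambda>\<omega>. (\<Sum>i<N n \<omega>. X i \<omega>) / real n powr (1 / \<alpha>))) L"
proof -
  interpret prob_space M by fact
  obtain S where S: "real_distribution S" and char_S: "\<And>t. char S t = complex_of_real (exp (- (\<bar>t\<bar> powr \<alpha>)))"
    and stable: "weak_conv_m (\<lambda>n. distr M borel (\<lambda>\<omega>. (\<Sum>i<n. X i \<omega>) / real n powr (1 / \<alpha>))) S"
    using stable_lim by blast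
  obtain L where L: "real_distribution L" and char_L: "\<And>t. char L t = complex_of_real ((1 + \<bar>t\<bar> powr \<alpha>) powr (- \<nu>))"
    using linnik_distribution_exists[OF \<open>0 < \<alpha>\<close> \<open>0 < \<nu>\<close> S char_S] by blast
  have "weak_conv_m (\<lambda>n. distr M borel (\<lambda>\<omega>. (\<Sum>i<N n \<omega>. X i \<omega>) / real n powr (1 / \<alpha>))) L"
  proof (rule weak_conv_negbin_random_sum[OF iid_indep iid_dist \<open>0 < \<nu>\<close> N_meas N_dist N_indep _ _ L char_L])
    show "(\<lambda>n. of_nat n * (1 - char (distr M borel (X 0)) (t / real n powr (1 / \<alpha>))))
        \<longlonglongrightarrow> complex_of_real (\<bar>t\<bar> powr \<alpha>)" for t
      by (rule tendsto_of_nat_mult_one_minus_char_of_stable_limit[OF \<open>0 < \<alpha>\<close> iid_indep iid_dist S char_S stable])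
    show "-1 < \<bar>t\<bar> powr \<alpha>" for t
      using powr_ge_zero[of "\<bar>t\<bar>" \<alpha>] by linarith
  qed
  with L char_L show ?thesis
    by blast
qed

end
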